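(* Let $m\in\mathbb N\cup\{\infty\}$ and let $f(\mathbf z)=\sum_{\mathbf p\in\mathbb Z_+^k,\,|\mathbf p|\le m}a_{\mathbf p}\mathbf z^{\mathbf p}$ be a holomorphic function on the polydisc $\mathbb D^k$ such that $\Re f(\mathbf z)\le1$ for all $\mathbf z\in\mathbb D^k$. (i) If $f(0)\ge0$, then $$\sum_{i=1}^k\Big|\frac{\partial f}{\partial z_i}(0)\Big|\le2(1-f(0))\cos\frac{\pi}{m+2}$$ (with $\cos\frac{\pi}{m+2}$ read as $1$ when $m=\infty$). (ii) If $m=\infty$ and $\mathbf a=(a_1,\dots,a_k)\in\mathbb D^k$ is such that $f(\mathbf a)\ge0$, then $$\sum_{i=1}^k(1-|a_i|^2)\Big|\frac{\partial f}{\partial z_i}(\mathbf a)\Big|\le2(1-f(\mathbf a)).$$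
   Context: $\mathbb D$ is the open unit disc, $\mathbf z^{\mathbf p}=z_1^{p_1}\cdots z_k^{p_k}$, $|\mathbf p|=p_1+\dots+p_k$; the condition $|\mathbf p|\le m$ is vacuous when $m=\infty$. "$f(0)\ge0$" means $f(0)$ is a nonnegative real number. *)

theory Defs
  imports "HOL-Analysis.Analysis" "HOL-Library.Extended_Nat"
begin

definition polydisc :: "('k::finite \<Rightarrow> complex) set" where
  "polydisc = {z. \<forall>i. norm (z i) < 1}"

definition mdeg :: "('k::finite \<Rightarrow> nat) \<Rightarrow> nat" where
  "mdeg p = (\<Sum>i\<in>UNIV. p i)"

definition monomial_val :: "('k::finite \<Rightarrow> complex) \<Rightarrow> ('k \<Rightarrow> nat) \<Rightarrow> complex" where
  "monomial_val z p = (\<Prod>i\<in>UNIV. z i ^ p i)"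

definition mindices :: "enat \<Rightarrow> ('k::finite \<Rightarrow> nat) set" where
  "mindices m = {p. enat (mdeg p) \<le> m}"

definition partial_deriv :: "(('k \<Rightarrow> complex) \<Rightarrow> complex) \<Rightarrow> 'k \<Rightarrow> ('k \<Rightarrow> complex) \<Rightarrow> complex" where
  "partial_deriv f i z = deriv (\<lambda>w. f (z(i := w))) (z i)"

definition cos_factor :: "enat \<Rightarrow> real" where
  "cos_factor m = (case m of enat n \<Rightarrow> cos (pi / (real n + 2)) | \<infinity> \<Rightarrow> 1)"

end

theory Submission
  imports Defs "HOL-Complex_Analysis.Complex_Analysis"
begin

text \<open>
  Everything is reduced to one variable by restricting \<open>f\<close> to analytic discs. For \<open>b\<close> in the
  polydisc and unimodular \<open>\<lambda>\<^sub>i\<close>, the disc \<open>t \<mapsto> (\<phi>\<^sub>i(\<lambda>\<^sub>i t))\<^sub>i\<close>, where \<open>\<phi>\<^sub>i\<close> is the automorphism of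
  \<open>\<bbbD>\<close> sending \<open>0\<close> to \<open>b\<^sub>i\<close>, stays in the polydisc, and by termwise differentiation of the
  series its derivative at \<open>0\<close> is \<open>\<Sum>\<^sub>i \<lambda>\<^sub>i (1 - |b\<^sub>i|\<^sup>2) \<partial>\<^sub>if(b)\<close>. Rotating every term to be
  nonnegative and applying Carath\'eodory's inequality \<open>|h'(0)| \<le> 2 (1 - Re h(0))\<close> for \<open>Re h \<le> 1\<close>
  gives (ii), and (i) for \<open>m = \<infinity>\<close>.

  For finite \<open>m\<close> and \<open>b = 0\<close> the restriction is a polynomial \<open>\<Sum>\<^sub>k\<^sub>\<le>\<^sub>m c\<^sub>k t\<^sup>k\<close> with real part at most
  one. Averaging it over the \<open>(m+2)\<close>-th roots \<open>\<zeta>\<^sub>j\<close> of \<open>-1\<close>, rotated suitably, with the nonnegative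
  weights \<open>cos (\<pi>/(m+2)) - Re \<zeta>\<^sub>j\<close> annihilates all coefficients except \<open>c\<^sub>0\<close> and \<open>c\<^sub>1\<close>, and yields
  \<open>|c\<^sub>1| \<le> 2 (1 - Re c\<^sub>0) cos (\<pi>/(m+2))\<close>.
\<close>

section \<open>Monomial series on the polydisc\<close>

lemma norm_monomial_val_le:
  assumes "\<And>i. norm (z i) \<le> R"
  shows "norm (monomial_val z p) \<le> R ^ mdeg p"
proof -
  have "norm (monomial_val z p) = (\<Prod>i\<in>UNIV. norm (z i) ^ p i)"
    by (simp add: monomial_val_def prod_norm[symmetric] norm_power)
  also have "\<dots> \<le> (\<Prod>i\<in>UNIV. R ^ p i)"
    by (intro prod_mono conjI power_mono assms) auto
  also have "\<dots> = R ^ mdeg p"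
    by (simp add: mdeg_def power_sum)
  finally show ?thesis .
qed

lemma norm_monomial_val_const:
  "0 \<le> R \<Longrightarrow> norm (monomial_val (\<lambda>_. complex_of_real R) p) = R ^ mdeg p"
  by (simp add: monomial_val_def prod_norm[symmetric] norm_power mdeg_def power_sum)

definition monomial_deriv :: "('k::finite \<Rightarrow> complex) \<Rightarrow> ('k \<Rightarrow> nat) \<Rightarrow> 'k \<Rightarrow> complex" where
  "monomial_deriv z p i = of_nat (p i) * z i ^ (p i - 1) * (\<Prod>j\<in>UNIV - {i}. z j ^ p j)"

lemma has_field_derivative_monomial_val:
  assumes "\<And>i. ((\<lambda>t. g t i) has_field_derivative g' i) (at t)"
  shows "((\<lambda>t. monomial_val (g t) p) has_field_derivative
           (\<Sum>i\<in>UNIV. g' i * monomial_deriv (g t) p i)) (at t)"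
proof -
  have "((\<lambda>u. \<Prod>i\<in>UNIV. g u i ^ p i) has_field_derivative
          (\<Sum>i\<in>UNIV. (of_nat (p i) * (g' i * g t i ^ (p i - Suc 0))) * (\<Prod>j\<in>UNIV - {i}. g t j ^ p j))) (at t)"
    by (rule has_field_derivative_prod) (intro DERIV_power assms)
  then show ?thesis
    unfolding monomial_val_def monomial_deriv_def by (simp add: ac_simps)
qed

lemma compact_polydisc_bound:
  fixes g :: "'c::topological_space \<Rightarrow> 'k::finite \<Rightarrow> complex"
  assumes "compact K" "\<And>i. continuous_on K (\<lambda>t. g t i)" "\<And>t. t \<in> K \<Longrightarrow> g t \<in> polydisc"
  obtains R where "0 \<le> R" "R < 1" "\<And>t i. t \<in> K \<Longrightarrow> norm (g t i) \<le> R"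
proof -
  have "\<exists>R<1. \<forall>t\<in>K. norm (g t i) \<le> R" for i
  proof (cases "K = {}")
    case False
    then obtain t where "t \<in> K" "\<forall>s\<in>K. norm (g s i) \<le> norm (g t i)"
      using continuous_attains_sup[OF assms(1) False continuous_on_norm[OF assms(2)]] by blast
    then show ?thesis
      using assms(3) by (auto simp: polydisc_def)
  qed (auto intro: exI[of _ 0])
  then obtain Ri where Ri: "\<And>i. Ri i < 1" "\<And>i t. t \<in> K \<Longrightarrow> norm (g t i) \<le> Ri i"
    by metis
  define R where "R = Max (insert 0 (range Ri))"
  have "Ri i \<le> R" for i
    unfolding R_def by (rule Max_ge) auto
  moreover have "0 \<le> R" "R < 1"
    unfolding R_def by (auto simp: Ri(1) Max_ge)
  ultimately show ?thesis
    using that Ri(2) by (meson order_trans)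
qed

lemma has_sum_sum:
  fixes f :: "'i \<Rightarrow> 'a \<Rightarrow> 'b::topological_comm_monoid_add"
  assumes "finite I" "\<And>i. i \<in> I \<Longrightarrow> (f i has_sum s i) A"
  shows "((\<lambda>x. \<Sum>i\<in>I. f i x) has_sum (\<Sum>i\<in>I. s i)) A"
proof -
  have "((\<lambda>X. \<Sum>i\<in>I. sum (f i) X) \<longlongrightarrow> (\<Sum>i\<in>I. s i)) (finite_subsets_at_top A)"
    by (rule tendsto_sum) (use assms(2) in \<open>simp add: has_sum_def\<close>)
  then show ?thesis
    unfolding has_sum_def by (simp add: sum.swap[of _ _ I])
qed

section \<open>Analytic discs through a point of the polydisc\<close>

text \<open>\<open>Moebius_function 0 (- w)\<close> is the automorphism of the unit disc sending \<open>0\<close> to \<open>w\<close>.\<close>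

definition moebius_slice :: "('k::finite \<Rightarrow> complex) \<Rightarrow> ('k \<Rightarrow> complex) \<Rightarrow> complex \<Rightarrow> 'k \<Rightarrow> complex" where
  "moebius_slice lam b t = (\<lambda>i. Moebius_function 0 (- b i) (lam i * t))"

lemma moebius_slice_0: "moebius_slice lam b 0 = b"
  by (simp add: moebius_slice_def Moebius_function_of_zero)

lemma moebius_slice_center_0: "moebius_slice lam (\<lambda>_. 0) t = (\<lambda>i. lam i * t)"
  by (simp add: moebius_slice_def Moebius_function_simple)

lemma moebius_slice_in_polydisc:
  assumes "b \<in> polydisc" "\<And>i. norm (lam i) = 1" "t \<in> ball 0 1"
  shows "moebius_slice lam b t \<in> polydisc"
  using assms by (simp add: moebius_slice_def polydisc_def Moebius_function_norm_lt_1 norm_mult)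

lemma holomorphic_on_moebius_slice:
  assumes "b \<in> polydisc" "\<And>i. norm (lam i) = 1"
  shows "(\<lambda>t. moebius_slice lam b t i) holomorphic_on ball 0 1"
proof -
  have "Moebius_function 0 (- b i) holomorphic_on ball 0 1"
    using assms(1) by (intro Moebius_function_holomorphic) (simp add: polydisc_def)
  moreover have "(\<lambda>t. lam i * t) ` ball 0 1 \<subseteq> ball 0 1"
    using assms(2) by (auto simp: norm_mult)
  ultimately have "(Moebius_function 0 (- b i) \<circ> (\<lambda>t. lam i * t)) holomorphic_on ball 0 1"
    by (intro holomorphic_on_compose_gen holomorphic_intros)
  then show ?thesis
    by (simp add: moebius_slice_def o_def)
qed

lemma deriv_moebius_slice_0:
  "deriv (\<lambda>t. moebius_slice lam b t i) 0 = lam i * of_real (1 - (norm (b i))\<^sup>2)"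
proof -
  have "((\<lambda>t. moebius_slice lam b t i) has_field_derivative lam i - b i * cnj (b i) * lam i) (at 0)"
    unfolding moebius_slice_def Moebius_function_simple
    by (auto intro!: derivative_eq_intros simp: power2_eq_square algebra_simps)
  moreover have "b i * cnj (b i) = of_real ((norm (b i))\<^sup>2)"
    using complex_norm_square[of "b i"] by simp
  ultimately show ?thesis
    by (simp add: DERIV_imp_deriv algebra_simps)
qed

section \<open>Carath\'eodory's inequality\<close>

lemma norm_deriv_0_le_of_Re_pos:
  assumes holo: "u holomorphic_on ball 0 1" and pos: "\<And>t. t \<in> ball 0 1 \<Longrightarrow> Re (u t) > 0"
  shows "norm (deriv u 0) \<le> 2 * Re (u 0)"
proof -
  define c where "c = u 0"
  have c0: "Re c > 0"
    using pos[of 0] by (simp add: c_def)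
  have den: "u t + cnj c \<noteq> 0" if "t \<in> ball 0 1" for t
    using pos[OF that] c0 by (auto simp: complex_eq_iff)
  define G where "G t = (u t - c) / (u t + cnj c)" for t
  have "G holomorphic_on ball 0 1"
    unfolding G_def by (intro holomorphic_intros holo) (use den in auto)
  moreover have "G 0 = 0"
    by (simp add: G_def c_def)
  moreover have "norm (G t) < 1" if "norm t < 1" for t
  proof -
    have t: "t \<in> ball 0 1"
      using that by simp
    have "norm (u t - c) ^ 2 < norm (u t + cnj c) ^ 2"
      using pos[OF t] c0 unfolding cmod_power2 by (simp add: power2_eq_square algebra_simps)
    then have "norm (u t - c) < norm (u t + cnj c)"
      using power_less_imp_less_base by fastforce
    then show ?thesis
      using den[OF t] by (simp add: G_def norm_divide divide_less_eq)
  qed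
  ultimately have "norm (deriv G 0) \<le> 1"
    using Schwarz_Lemma(2) by (metis norm_zero zero_less_one)
  have d0: "u 0 + cnj c \<noteq> 0"
    using den[of 0] by simp
  have "(G has_field_derivative
          (deriv u 0 * (u 0 + cnj c) - (u 0 - c) * deriv u 0) / (u 0 + cnj c)\<^sup>2) (at 0)"
    unfolding G_def using holomorphic_derivI[OF holo open_ball, of 0] d0
    by (auto intro!: derivative_eq_intros simp: power2_eq_square)
  then have "deriv G 0 = deriv u 0 / (c + cnj c)"
    using d0 by (simp add: DERIV_imp_deriv c_def power2_eq_square)
  then have "deriv G 0 = deriv u 0 / of_real (2 * Re c)"
    by (simp add: complex_add_cnj)
  with \<open>norm (deriv G 0) \<le> 1\<close> c0 show ?thesis
    by (simp add: c_def norm_divide divide_le_eq)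
qed

lemma norm_deriv_0_le_of_Re_le_1:
  assumes holo: "h holomorphic_on ball 0 1" and re: "\<And>t. t \<in> ball 0 1 \<Longrightarrow> Re (h t) \<le> 1"
  shows "norm (deriv h 0) \<le> 2 * (1 - Re (h 0))"
proof (rule field_le_epsilon)
  fix e :: real assume e: "0 < e"
  define u where "u t = complex_of_real (1 + e / 2) - h t" for t
  have "u holomorphic_on ball 0 1"
    unfolding u_def by (intro holomorphic_intros holo)
  then have "norm (deriv u 0) \<le> 2 * Re (u 0)"
    by (rule norm_deriv_0_le_of_Re_pos) (use re e in \<open>force simp: u_def\<close>)
  moreover have "deriv u 0 = - deriv h 0"
    unfolding u_def using holomorphic_derivI[OF holo open_ball, of 0]
    by (auto intro!: DERIV_imp_deriv derivative_eq_intros)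
  ultimately show "norm (deriv h 0) \<le> 2 * (1 - Re (h 0)) + e"
    by (simp add: u_def algebra_simps)
qed

section \<open>Polynomials with real part at most one\<close>

definition neg_one_root :: "nat \<Rightarrow> nat \<Rightarrow> complex" where
  "neg_one_root N j = cis (real (2 * j + 1) * pi / real N)"

definition node_weight :: "nat \<Rightarrow> nat \<Rightarrow> real" where
  "node_weight N j = cos (pi / real N) - Re (neg_one_root N j)"

lemma norm_neg_one_root [simp]: "norm (neg_one_root N j) = 1"
  by (simp add: neg_one_root_def)

lemma sum_neg_one_root_power:
  assumes "0 < l" "l < N"
  shows "(\<Sum>j<N. neg_one_root N j ^ l) = 0"
proof -
  define x where "x = cis (2 * real l * pi / real N)"
  have N: "real N > 0"
    using assms by simp
  have "neg_one_root N j ^ l = cis (real l * pi / real N) * x ^ j" for j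
  proof -
    have "real l * (real (2 * j + 1) * pi / real N) = real l * pi / real N + real j * (2 * real l * pi / real N)"
      by (simp add: algebra_simps add_divide_distrib)
    then show ?thesis
      by (simp add: neg_one_root_def x_def Complex.DeMoivre cis_mult)
  qed
  then have "(\<Sum>j<N. neg_one_root N j ^ l) = cis (real l * pi / real N) * (\<Sum>j<N. x ^ j)"
    by (simp add: sum_distrib_left)
  moreover have "x ^ N = 1"
    using N cis_multiple_2pi[of "real l"] by (simp add: x_def Complex.DeMoivre mult_ac)
  moreover have "x \<noteq> 1"
  proof
    assume "x = 1"
    then have "cos (2 * real l * pi / real N) = 1"
      unfolding x_def by (metis cis.sel(1) one_complex.sel(1))
    then obtain n :: int where "2 * real l * pi / real N = real_of_int n * 2 * pi"
      using cos_one_2pi_int by blast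
    then have "real l = real_of_int n * real N"
      using N by (simp add: field_simps)
    then have "int l = n * int N"
      by (metis of_int_eq_iff of_int_mult of_int_of_nat_eq)
    moreover have "n * int N \<le> 0 \<or> int N \<le> n * int N"
    proof (cases "n \<le> 0")
      case False
      then have "1 * int N \<le> n * int N"
        by (intro mult_right_mono) auto
      then show ?thesis
        by simp
    qed (simp add: mult_nonpos_nonneg)
    ultimately show False
      using assms by linarith
  qed
  ultimately show ?thesis
    by (simp add: sum_gp_strict)
qed

lemma node_weight_nonneg:
  assumes "j < N"
  shows "0 \<le> node_weight N j"
proof -
  define u where "u = pi / real N"
  define \<theta> where "\<theta> = real (2 * j + 1) * u"
  have u: "0 < u" "u \<le> pi" "real N * u = pi"
    using assms by (auto simp: u_def divide_le_eq)
  have "u \<le> \<theta>" "u \<le> 2 * pi - \<theta>"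
  proof -
    show "u \<le> \<theta>"
      using u by (simp add: \<theta>_def)
    have "1 \<le> 2 * real N - real (2 * j + 1)"
      using assms by simp
    then have "1 * u \<le> (2 * real N - real (2 * j + 1)) * u"
      using u by (intro mult_right_mono) auto
    then show "u \<le> 2 * pi - \<theta>"
      using u by (simp add: \<theta>_def algebra_simps)
  qed
  then have "cos \<theta> \<le> cos u"
    using u cos_mono_le_eq[of \<theta> u] cos_mono_le_eq[of "2 * pi - \<theta>" u]
    by (cases "\<theta> \<le> pi") auto
  then show ?thesis
    by (simp add: node_weight_def neg_one_root_def \<theta>_def u_def)
qed

text \<open>Since \<open>Re \<zeta> = (\<zeta> + 1 / \<zeta>) / 2\<close> on the unit circle, the weighted moments reduce to power
  sums of the nodes.\<close>

lemma sum_node_weight_power: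
  assumes "k + 2 \<le> N"
  shows "(\<Sum>j<N. of_real (node_weight N j) * neg_one_root N j ^ k) =
           (if k = 0 then of_real (real N * cos (pi / real N)) else if k = 1 then - of_nat N / 2 else 0)"
proof -
  let ?\<zeta> = "neg_one_root N" and ?S = "\<lambda>l. \<Sum>j<N. neg_one_root N j ^ l"
  have unit: "cnj (?\<zeta> j) * ?\<zeta> j = 1" for j
    using complex_norm_square[of "?\<zeta> j"] by (simp add: mult.commute)
  have "of_real (Re (?\<zeta> j)) = (?\<zeta> j + cnj (?\<zeta> j)) / 2" for j
    using complex_add_cnj[of "?\<zeta> j"] by simp
  then have term_eq: "of_real (node_weight N j) * ?\<zeta> j ^ k =
          of_real (cos (pi / real N)) * ?\<zeta> j ^ k - (?\<zeta> j ^ Suc k + cnj (?\<zeta> j) * ?\<zeta> j ^ k) / 2" for j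
    by (simp add: node_weight_def algebra_simps add_divide_distrib)
  then have moment: "(\<Sum>j<N. of_real (node_weight N j) * ?\<zeta> j ^ k) =
      of_real (cos (pi / real N)) * ?S k - (?S (Suc k) + (\<Sum>j<N. cnj (?\<zeta> j) * ?\<zeta> j ^ k)) / 2"
    unfolding term_eq sum_subtractf sum_divide_distrib[symmetric] sum.distrib sum_distrib_left[symmetric]
    by simp
  have S0: "?S 0 = of_nat N" and S_zero: "0 < l \<Longrightarrow> l \<le> Suc k \<Longrightarrow> ?S l = 0" for l
    using assms sum_neg_one_root_power by auto
  show ?thesis
  proof (cases k)
    case 0
    have "(\<Sum>j<N. cnj (?\<zeta> j)) = cnj (?S 1)"
      by simp
    also have "\<dots> = 0"
      using S_zero[of 1] 0 by simp
    finally show ?thesis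
      using moment S0 S_zero[of 1] 0 by simp
  next
    case (Suc l)
    have "(\<Sum>j<N. cnj (?\<zeta> j) * ?\<zeta> j ^ k) = ?S l"
      using unit by (simp add: Suc mult.assoc[symmetric])
    then show ?thesis
      unfolding moment using S0 S_zero[of k] S_zero[of "Suc k"] S_zero[of l] Suc by auto
  qed
qed

lemma exists_unit_mult_eq_norm: "\<exists>l::complex. norm l = 1 \<and> l * d = of_real (norm d)"
proof (cases "d = 0")
  case False
  have "cnj d * d = of_real (norm d) * of_real (norm d)"
    using complex_norm_square[of d] by (simp add: power2_eq_square mult.commute)
  then have "cnj d / of_real (norm d) * d = of_real (norm d)"
    using False by simp
  moreover have "norm (cnj d / of_real (norm d)) = 1"
    using False by (simp add: norm_divide)
  ultimately show ?thesis
    by blast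
qed (auto intro: exI[of _ 1])

lemma norm_coeff_1_le_of_Re_poly_le_1_on_circle:
  fixes c :: "nat \<Rightarrow> complex"
  assumes deg: "\<And>k. n < k \<Longrightarrow> c k = 0"
    and Re_le: "\<And>t. norm t = 1 \<Longrightarrow> Re (\<Sum>k\<le>n. c k * t ^ k) \<le> 1"
  shows "norm (c 1) \<le> 2 * (1 - Re (c 0)) * cos (pi / (real n + 2))"
proof -
  define N where "N = n + 2"
  define \<beta> where "\<beta> = pi / real N"
  let ?\<zeta> = "neg_one_root N" and ?w = "\<lambda>j. of_real (node_weight N j)"
  obtain l where l: "norm l = 1" "l * c 1 = of_real (norm (c 1))"
    using exists_unit_mult_eq_norm by blast
  define \<sigma> where "\<sigma> = - l"
  have moment: "(\<Sum>j<N. ?w j * ?\<zeta> j ^ k) = (if k = 0 then of_real (real N * cos \<beta>)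
                  else if k = 1 then - of_nat N / 2 else 0)" if "k \<le> n" for k
    using that sum_node_weight_power[of k N] by (simp add: N_def \<beta>_def)
  have "(\<Sum>j<N. ?w j * (\<Sum>k\<le>n. c k * (\<sigma> * ?\<zeta> j) ^ k)) =
          (\<Sum>k\<le>n. c k * \<sigma> ^ k * (\<Sum>j<N. ?w j * ?\<zeta> j ^ k))"
    by (simp add: sum_distrib_left sum.swap[of _ "{..<N}"] power_mult_distrib mult_ac)
  also have "\<dots> = (\<Sum>k\<le>n. if k = 0 then of_real (real N * cos \<beta>) * c 0
                           else if k = 1 then - of_nat N / 2 * (\<sigma> * c 1) else 0)"
    by (intro sum.cong refl) (simp add: moment)
  also have "\<dots> = of_real (real N * cos \<beta>) * c 0 + (if n = 0 then 0 else - of_nat N / 2 * (\<sigma> * c 1))"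
    by (induction n) auto
  also have "\<dots> = of_real (real N * cos \<beta>) * c 0 + of_real (real N / 2 * norm (c 1))"
    using deg[of 1] l(2) by (auto simp: \<sigma>_def)
  finally have moment_sum: "(\<Sum>j<N. ?w j * (\<Sum>k\<le>n. c k * (\<sigma> * ?\<zeta> j) ^ k)) =
      of_real (real N * cos \<beta>) * c 0 + of_real (real N / 2 * norm (c 1))" .
  have "Re (\<Sum>j<N. ?w j * (\<Sum>k\<le>n. c k * (\<sigma> * ?\<zeta> j) ^ k)) =
          (\<Sum>j<N. node_weight N j * Re (\<Sum>k\<le>n. c k * (\<sigma> * ?\<zeta> j) ^ k))"
    by simp
  also have "\<dots> \<le> (\<Sum>j<N. node_weight N j * 1)"
    using l(1) by (intro sum_mono mult_left_mono node_weight_nonneg Re_le) (auto simp: \<sigma>_def norm_mult)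
  also have "\<dots> = real N * cos \<beta>"
    using arg_cong[OF moment[of 0], of Re] by simp
  finally have "real N * (cos \<beta> * Re (c 0) + norm (c 1) / 2) \<le> real N * cos \<beta>"
    unfolding moment_sum by (simp add: algebra_simps)
  then have "cos \<beta> * Re (c 0) + norm (c 1) / 2 \<le> cos \<beta>"
    by (simp add: N_def mult_le_cancel_left_pos del: of_nat_add)
  then show ?thesis
    by (simp add: N_def \<beta>_def algebra_simps)
qed

lemma norm_coeff_1_le_of_Re_poly_le_1:
  fixes c :: "nat \<Rightarrow> complex"
  assumes deg: "\<And>k. n < k \<Longrightarrow> c k = 0"
    and Re_le: "\<And>t. norm t < 1 \<Longrightarrow> Re (\<Sum>k\<le>n. c k * t ^ k) \<le> 1"
  shows "norm (c 1) \<le> 2 * (1 - Re (c 0)) * cos (pi / (real n + 2))"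
proof (rule field_le_mult_one_interval)
  fix r :: real assume r: "0 < r" "r < 1"
  have "norm (c 1 * of_real r ^ 1) \<le> 2 * (1 - Re (c 0 * of_real r ^ 0)) * cos (pi / (real n + 2))"
  proof (rule norm_coeff_1_le_of_Re_poly_le_1_on_circle[where c = "\<lambda>k. c k * of_real r ^ k"])
    fix t :: complex assume "norm t = 1"
    then show "Re (\<Sum>k\<le>n. c k * of_real r ^ k * t ^ k) \<le> 1"
      using Re_le[of "of_real r * t"] r by (simp add: norm_mult power_mult_distrib mult.assoc)
  qed (use deg in simp)
  then show "r * norm (c 1) \<le> 2 * (1 - Re (c 0)) * cos (pi / (real n + 2))"
    using r by (simp add: norm_mult mult.commute)
qed

section \<open>Derivatives of a monomial series along analytic discs\<close>

context
  fixes a :: "('k::finite \<Rightarrow> nat) \<Rightarrow> complex" and M :: "('k \<Rightarrow> nat) set"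
    and f :: "('k \<Rightarrow> complex) \<Rightarrow> complex"
  assumes summable: "\<forall>z\<in>polydisc. (\<lambda>p. a p * monomial_val z p) summable_on M"
    and f_eq: "\<forall>z\<in>polydisc. f z = (\<Sum>\<^sub>\<infinity>p\<in>M. a p * monomial_val z p)"
begin

lemma uniform_limit_monomial_series:
  assumes "0 \<le> R" "R < 1" "\<And>t i. t \<in> K \<Longrightarrow> norm (g t i) \<le> R"
  shows "uniform_limit K (\<lambda>X t. \<Sum>p\<in>X. a p * monomial_val (g t) p) (\<lambda>t. f (g t))
           (finite_subsets_at_top M)"
proof (rule Weierstrass_m_test_general')
  have "(\<lambda>_. complex_of_real R) \<in> polydisc"
    using assms(1,2) by (simp add: polydisc_def)
  then have "(\<lambda>p. norm (a p * monomial_val (\<lambda>_. complex_of_real R) p)) summable_on M"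
    using summable summable_on_iff_abs_summable_on_complex[THEN iffD1] by blast
  then show "(\<lambda>p. norm (a p) * R ^ mdeg p) summable_on M"
    by (simp add: norm_mult norm_monomial_val_const[OF assms(1)])
  fix p t assume "t \<in> K"
  then show "norm (a p * monomial_val (g t) p) \<le> norm (a p) * R ^ mdeg p"
    unfolding norm_mult by (intro mult_left_mono norm_monomial_val_le assms(3)) auto
  have "g t \<in> polydisc"
    using \<open>t \<in> K\<close> assms(2,3) by (auto simp: polydisc_def intro: le_less_trans)
  then show "((\<lambda>p. a p * monomial_val (g t) p) has_sum f (g t)) M"
    using summable f_eq by auto
qed

lemma has_field_derivative_monomial_series_path:
  fixes g :: "complex \<Rightarrow> 'k \<Rightarrow> complex"
  assumes "open U" "t0 \<in> U" "\<And>t. t \<in> U \<Longrightarrow> g t \<in> polydisc"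
    and g': "\<And>t i. t \<in> U \<Longrightarrow> ((\<lambda>t. g t i) has_field_derivative g' i t) (at t)"
  obtains D where "((\<lambda>t. f (g t)) has_field_derivative D) (at t0)"
    and "((\<lambda>p. a p * (\<Sum>i\<in>UNIV. g' i t0 * monomial_deriv (g t0) p i)) has_sum D) M"
proof -
  obtain r where r: "0 < r" "cball t0 r \<subseteq> U"
    using assms(1,2) open_contains_cball by blast
  have "continuous_on (cball t0 r) (\<lambda>t. g t i)" for i
    using r(2) g' by (intro continuous_at_imp_continuous_on) (auto intro: DERIV_isCont)
  then obtain R where R: "0 \<le> R" "R < 1" "\<And>t i. t \<in> cball t0 r \<Longrightarrow> norm (g t i) \<le> R"
    using compact_polydisc_bound[OF compact_cball] assms(3) r(2) by (metis subsetD)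
  define fn where "fn X t = (\<Sum>p\<in>X. a p * monomial_val (g t) p)" for X t
  define fn' where "fn' X t = (\<Sum>p\<in>X. a p * (\<Sum>i\<in>UNIV. g' i t * monomial_deriv (g t) p i))" for X t
  have der: "(fn X has_field_derivative fn' X t) (at t)" if "t \<in> cball t0 r" for X t
    unfolding fn_def fn'_def
    using that r(2) by (intro DERIV_sum DERIV_cmult has_field_derivative_monomial_val g') auto
  have ev: "\<forall>\<^sub>F X in finite_subsets_at_top M. continuous_on (cball t0 r) (fn X) \<and>
          (\<forall>w\<in>ball t0 r. (fn X has_field_derivative fn' X w) (at w))"
    using der by (intro always_eventually allI conjI ballI DERIV_continuous_on)
      (auto intro: has_field_derivative_at_within)
  have ul: "uniform_limit (cball t0 r) fn (\<lambda>t. f (g t)) (finite_subsets_at_top M)"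
    unfolding fn_def using R by (rule uniform_limit_monomial_series)
  have "\<not> trivial_limit (finite_subsets_at_top M)"
    by simp
  then obtain D where "\<And>w. w \<in> ball t0 r \<Longrightarrow>
      ((\<lambda>t. f (g t)) has_field_derivative D w) (at w) \<and>
      ((\<lambda>X. fn' X w) \<longlongrightarrow> D w) (finite_subsets_at_top M)"
    using has_complex_derivative_uniform_limit[OF ev ul _ r(1)] by blast
  then have "((\<lambda>t. f (g t)) has_field_derivative D t0) (at t0)"
      "((\<lambda>X. fn' X t0) \<longlongrightarrow> D t0) (finite_subsets_at_top M)"
    using r(1) by auto
  then show ?thesis
    using that unfolding has_sum_def fn'_def by blast
qed

lemma has_sum_partial_deriv:
  assumes "b \<in> polydisc"
  shows "((\<lambda>p. a p * monomial_deriv b p i) has_sum partial_deriv f i b) M"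
proof -
  define g' where "g' j t = (if j = i then 1 else 0 :: complex)" for j and t :: complex
  have "b i \<in> ball 0 1"
    using assms by (simp add: polydisc_def)
  moreover have "(\<lambda>w. b(i := w)) w \<in> polydisc" if "w \<in> ball 0 1" for w
    using assms that by (simp add: polydisc_def)
  moreover have "((\<lambda>w. (b(i := w)) j) has_field_derivative g' j w) (at w)" for j w
    by (cases "j = i") (auto simp: g'_def intro!: derivative_eq_intros)
  ultimately obtain D where D: "((\<lambda>w. f (b(i := w))) has_field_derivative D) (at (b i))"
      "((\<lambda>p. a p * (\<Sum>j\<in>UNIV. g' j (b i) * monomial_deriv (b(i := b i)) p j)) has_sum D) M"
    by (rule has_field_derivative_monomial_series_path[OF open_ball])
  have "partial_deriv f i b = D"
    unfolding partial_deriv_def using D(1) by (rule DERIV_imp_deriv)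
  moreover have "(\<Sum>j\<in>UNIV. g' j (b i) * monomial_deriv (b(i := b i)) p j) = monomial_deriv b p i" for p
    by (simp add: g'_def if_distrib[of "\<lambda>c. c * _"] cong: if_cong)
  ultimately show ?thesis
    using D(2) by simp
qed

lemma has_field_derivative_comp_polydisc:
  fixes g :: "complex \<Rightarrow> 'k \<Rightarrow> complex"
  assumes "open U" "t0 \<in> U" "\<And>t. t \<in> U \<Longrightarrow> g t \<in> polydisc"
    and "\<And>t i. t \<in> U \<Longrightarrow> ((\<lambda>t. g t i) has_field_derivative g' i t) (at t)"
  shows "((\<lambda>t. f (g t)) has_field_derivative (\<Sum>i\<in>UNIV. g' i t0 * partial_deriv f i (g t0))) (at t0)"
proof -
  obtain D where D: "((\<lambda>t. f (g t)) has_field_derivative D) (at t0)"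
      "((\<lambda>p. a p * (\<Sum>i\<in>UNIV. g' i t0 * monomial_deriv (g t0) p i)) has_sum D) M"
    using has_field_derivative_monomial_series_path[OF assms] .
  have "((\<lambda>p. \<Sum>i\<in>UNIV. g' i t0 * (a p * monomial_deriv (g t0) p i)) has_sum
          (\<Sum>i\<in>UNIV. g' i t0 * partial_deriv f i (g t0))) M"
    using assms(2,3) by (intro has_sum_sum has_sum_cmult_right has_sum_partial_deriv) auto
  then have "D = (\<Sum>i\<in>UNIV. g' i t0 * partial_deriv f i (g t0))"
    using D(2) by (simp add: sum_distrib_left mult_ac has_sum_unique)
  then show ?thesis
    using D(1) by simp
qed

lemma holomorphic_on_comp_polydisc:
  assumes "open U" "\<And>t. t \<in> U \<Longrightarrow> g t \<in> polydisc" "\<And>i. (\<lambda>t. g t i) holomorphic_on U"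
  shows "(\<lambda>t. f (g t)) holomorphic_on U"
proof -
  have "((\<lambda>t. f (g t)) has_field_derivative
          (\<Sum>i\<in>UNIV. deriv (\<lambda>t. g t i) t * partial_deriv f i (g t))) (at t)" if "t \<in> U" for t
    using assms that
    by (intro has_field_derivative_comp_polydisc holomorphic_derivI[OF assms(3) assms(1)]) auto
  then show ?thesis
    using holomorphic_on_open[OF assms(1)] by blast
qed

lemma deriv_comp_moebius_slice:
  assumes "b \<in> polydisc" "\<And>i. norm (lam i) = 1"
  shows "deriv (\<lambda>t. f (moebius_slice lam b t)) 0 =
           (\<Sum>i\<in>UNIV. lam i * of_real (1 - (norm (b i))\<^sup>2) * partial_deriv f i b)"
proof -
  have "((\<lambda>t. f (moebius_slice lam b t)) has_field_derivative
          (\<Sum>i\<in>UNIV. deriv (\<lambda>t. moebius_slice lam b t i) 0 * partial_deriv f i (moebius_slice lam b 0)))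
          (at 0)"
  proof (rule has_field_derivative_comp_polydisc[OF open_ball])
    show "(0::complex) \<in> ball 0 1"
      by simp
    show "moebius_slice lam b t \<in> polydisc" if "t \<in> ball 0 1" for t
      using assms that by (rule moebius_slice_in_polydisc)
    show "((\<lambda>t. moebius_slice lam b t i) has_field_derivative deriv (\<lambda>t. moebius_slice lam b t i) t) (at t)"
      if "t \<in> ball 0 1" for t i
      using holomorphic_derivI[OF holomorphic_on_moebius_slice[OF assms] open_ball that] .
  qed
  then show ?thesis
    by (simp add: DERIV_imp_deriv deriv_moebius_slice_0 moebius_slice_0)
qed

lemma aligned_moebius_slice_exists:
  assumes Re_le: "\<forall>z\<in>polydisc. Re (f z) \<le> 1" and "b \<in> polydisc"
  obtains lam where "\<And>i. norm (lam i) = 1"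
    and "(\<lambda>t. f (moebius_slice lam b t)) holomorphic_on ball 0 1"
    and "\<And>t. t \<in> ball 0 1 \<Longrightarrow> Re (f (moebius_slice lam b t)) \<le> 1"
    and "deriv (\<lambda>t. f (moebius_slice lam b t)) 0 =
           of_real (\<Sum>i\<in>UNIV. (1 - (norm (b i))\<^sup>2) * norm (partial_deriv f i b))"
proof -
  obtain lam where lam: "\<And>i. norm (lam i) = 1"
      "\<And>i. lam i * partial_deriv f i b = of_real (norm (partial_deriv f i b))"
    using exists_unit_mult_eq_norm[of "partial_deriv f _ b"] by metis
  have "(\<lambda>t. f (moebius_slice lam b t)) holomorphic_on ball 0 1"
    using assms lam(1)
    by (intro holomorphic_on_comp_polydisc holomorphic_on_moebius_slice
        moebius_slice_in_polydisc) auto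
  moreover have "Re (f (moebius_slice lam b t)) \<le> 1" if "t \<in> ball 0 1" for t
    using Re_le moebius_slice_in_polydisc[of b lam t] assms lam(1) that by blast
  moreover have "deriv (\<lambda>t. f (moebius_slice lam b t)) 0 =
           of_real (\<Sum>i\<in>UNIV. (1 - (norm (b i))\<^sup>2) * norm (partial_deriv f i b))"
    unfolding deriv_comp_moebius_slice[OF assms(2) lam(1)]
    unfolding of_real_sum by (intro sum.cong refl) (simp add: lam(2)[symmetric] mult_ac)
  ultimately show ?thesis
    using that lam(1) by blast
qed

lemma weighted_sum_norm_partial_deriv_le:
  assumes "\<forall>z\<in>polydisc. Re (f z) \<le> 1" and "b \<in> polydisc"
  shows "(\<Sum>i\<in>UNIV. (1 - (norm (b i))\<^sup>2) * norm (partial_deriv f i b)) \<le> 2 * (1 - Re (f b))"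
proof -
  obtain lam where "\<And>i. norm (lam i) = 1"
    and holo: "(\<lambda>t. f (moebius_slice lam b t)) holomorphic_on ball 0 1"
    and Re_slice: "\<And>t. t \<in> ball 0 1 \<Longrightarrow> Re (f (moebius_slice lam b t)) \<le> 1"
    and deriv_eq: "deriv (\<lambda>t. f (moebius_slice lam b t)) 0 =
           of_real (\<Sum>i\<in>UNIV. (1 - (norm (b i))\<^sup>2) * norm (partial_deriv f i b))"
    using aligned_moebius_slice_exists[OF assms] by blast
  have "0 \<le> 1 - (norm (b i))\<^sup>2" for i
    using assms by (simp add: polydisc_def abs_square_le_1 less_imp_le)
  then have "0 \<le> (\<Sum>i\<in>UNIV. (1 - (norm (b i))\<^sup>2) * norm (partial_deriv f i b))"
    by (simp add: sum_nonneg)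
  moreover have "norm (deriv (\<lambda>t. f (moebius_slice lam b t)) 0) \<le> 2 * (1 - Re (f (moebius_slice lam b 0)))"
    using holo Re_slice by (rule norm_deriv_0_le_of_Re_le_1)
  ultimately show ?thesis
    unfolding deriv_eq norm_of_real moebius_slice_0 by simp
qed

end

lemma monomial_val_scale:
  "monomial_val (\<lambda>i. lam i * t) p = monomial_val lam p * t ^ mdeg p"
  by (simp add: monomial_val_def mdeg_def power_mult_distrib prod.distrib power_sum)

lemma finite_mindices_enat: "finite (mindices (enat n) :: ('k::finite \<Rightarrow> nat) set)"
proof (rule finite_subset)
  show "mindices (enat n) \<subseteq> (PiE UNIV (\<lambda>_. {..n}) :: ('k \<Rightarrow> nat) set)"
  proof
    fix p :: "'k \<Rightarrow> nat" assume "p \<in> mindices (enat n)"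
    moreover have "p i \<le> mdeg p" for i
      unfolding mdeg_def by (rule member_le_sum) auto
    ultimately show "p \<in> PiE UNIV (\<lambda>_. {..n})"
      by (auto simp: mindices_def PiE_UNIV_domain intro: le_trans)
  qed
qed (simp add: finite_PiE)

lemma sum_monomial_val_scale_by_degree:
  assumes "finite M" "\<And>p. p \<in> M \<Longrightarrow> mdeg p \<le> n"
  shows "(\<Sum>p\<in>M. a p * monomial_val (\<lambda>i. lam i * t) p) =
           (\<Sum>k\<le>n. (\<Sum>p\<in>{p\<in>M. mdeg p = k}. a p * monomial_val lam p) * t ^ k)"
proof -
  have "(\<Sum>p\<in>M. a p * monomial_val (\<lambda>i. lam i * t) p) =
          (\<Sum>k\<le>n. \<Sum>p\<in>{p\<in>M. mdeg p = k}. a p * monomial_val lam p * t ^ mdeg p)"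
    unfolding monomial_val_scale mult.assoc using assms by (intro sum.group[symmetric]) auto
  then show ?thesis
    by (simp add: sum_distrib_right)
qed

lemma has_field_derivative_poly_at_0:
  fixes c :: "nat \<Rightarrow> complex"
  assumes "\<And>k. n < k \<Longrightarrow> c k = 0"
  shows "((\<lambda>t. \<Sum>k\<le>n. c k * t ^ k) has_field_derivative c 1) (at 0)"
proof -
  have "((\<lambda>t. \<Sum>k\<le>n. c k * t ^ k) has_field_derivative
          (\<Sum>k\<le>n. c k * (of_nat k * (1 * 0 ^ (k - Suc 0))))) (at 0)"
    by (intro DERIV_sum DERIV_cmult DERIV_power DERIV_ident)
  moreover have "(\<Sum>k\<le>n. c k * (of_nat k * (1 * 0 ^ (k - Suc 0)))) = (\<Sum>k\<le>n. if k = 1 then c 1 else 0)"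
    by (intro sum.cong refl) auto
  moreover have "(\<Sum>k\<le>n. if k = 1 then c 1 else 0) = c 1"
    using assms[of 1] by auto
  ultimately show ?thesis
    by (metis DERIV_cong)
qed

lemma sum_norm_partial_deriv_0_le:
  fixes a :: "('k::finite \<Rightarrow> nat) \<Rightarrow> complex" and f :: "('k \<Rightarrow> complex) \<Rightarrow> complex"
  assumes summable: "\<forall>z\<in>polydisc. (\<lambda>p. a p * monomial_val z p) summable_on mindices (enat n)"
    and f_eq: "\<forall>z\<in>polydisc. f z = (\<Sum>\<^sub>\<infinity>p\<in>mindices (enat n). a p * monomial_val z p)"
    and Re_le: "\<forall>z\<in>polydisc. Re (f z) \<le> 1"
  shows "(\<Sum>i\<in>UNIV. norm (partial_deriv f i (\<lambda>_. 0))) \<le>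
           2 * (1 - Re (f (\<lambda>_. 0))) * cos (pi / (real n + 2))"
proof -
  let ?M = "mindices (enat n) :: ('k \<Rightarrow> nat) set"
  have zero: "(\<lambda>_. 0) \<in> polydisc"
    by (simp add: polydisc_def)
  obtain lam where lam: "\<And>i. norm (lam i) = 1"
    and "(\<lambda>t. f (moebius_slice lam (\<lambda>_. 0) t)) holomorphic_on ball 0 1"
    and Re_slice: "\<And>t. t \<in> ball 0 1 \<Longrightarrow> Re (f (moebius_slice lam (\<lambda>_. 0) t)) \<le> 1"
    and deriv_eq: "deriv (\<lambda>t. f (moebius_slice lam (\<lambda>_. 0) t)) 0 =
           of_real (\<Sum>i\<in>UNIV. norm (partial_deriv f i (\<lambda>_. 0)))"
    using aligned_moebius_slice_exists[OF summable f_eq Re_le zero] by auto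
  define C where "C k = (\<Sum>p\<in>{p\<in>?M. mdeg p = k}. a p * monomial_val lam p)" for k
  have poly: "f (moebius_slice lam (\<lambda>_. 0) t) = (\<Sum>k\<le>n. C k * t ^ k)" if "t \<in> ball 0 1" for t
  proof -
    have "moebius_slice lam (\<lambda>_. 0) t \<in> polydisc"
      using zero lam that by (rule moebius_slice_in_polydisc)
    then have "f (moebius_slice lam (\<lambda>_. 0) t) = (\<Sum>p\<in>?M. a p * monomial_val (\<lambda>i. lam i * t) p)"
      using f_eq by (simp add: moebius_slice_center_0 finite_mindices_enat)
    also have "\<dots> = (\<Sum>k\<le>n. C k * t ^ k)"
      unfolding C_def by (rule sum_monomial_val_scale_by_degree[OF finite_mindices_enat]) (simp add: mindices_def)
    finally show ?thesis .
  qed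
  have deg: "C k = 0" if "n < k" for k
    using that by (auto simp: C_def mindices_def intro!: sum.neutral)
  have bound: "norm (C 1) \<le> 2 * (1 - Re (C 0)) * cos (pi / (real n + 2))"
  proof (rule norm_coeff_1_le_of_Re_poly_le_1[OF deg])
    fix t :: complex assume "norm t < 1"
    then show "Re (\<Sum>k\<le>n. C k * t ^ k) \<le> 1"
      using Re_slice[of t] poly[of t] by simp
  qed
  have "((\<lambda>t. f (moebius_slice lam (\<lambda>_. 0) t)) has_field_derivative C 1) (at 0)"
    by (rule has_field_derivative_transform_within_open[OF has_field_derivative_poly_at_0[OF deg], where S = "ball 0 1"])
      (simp_all add: poly)
  then have "norm (C 1) = norm (deriv (\<lambda>t. f (moebius_slice lam (\<lambda>_. 0) t)) 0)"
    by (simp add: DERIV_imp_deriv)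
  also have "\<dots> = (\<Sum>i\<in>UNIV. norm (partial_deriv f i (\<lambda>_. 0)))"
    unfolding deriv_eq norm_of_real by (simp add: sum_nonneg)
  finally show ?thesis
    using bound poly[of 0] by (simp add: moebius_slice_0)
qed

theorem corollary6p7:
  fixes m :: enat
    and a :: "('k::finite \<Rightarrow> nat) \<Rightarrow> complex"
    and f :: "('k \<Rightarrow> complex) \<Rightarrow> complex"
  assumes summable: "\<forall>z\<in>polydisc. (\<lambda>p. a p * monomial_val z p) summable_on mindices m"
    and f_eq: "\<forall>z\<in>polydisc. f z = (\<Sum>\<^sub>\<infinity>p\<in>mindices m. a p * monomial_val z p)"
    and re_le: "\<forall>z\<in>polydisc. Re (f z) \<le> 1"
  shows "(f (\<lambda>_. 0) \<in> \<real> \<and> Re (f (\<lambda>_. 0)) \<ge> 0 \<longrightarrow>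
           (\<Sum>i\<in>UNIV. norm (partial_deriv f i (\<lambda>_. 0))) \<le> 2 * (1 - Re (f (\<lambda>_. 0))) * cos_factor m)
       \<and> (m = \<infinity> \<longrightarrow> (\<forall>b\<in>polydisc. f b \<in> \<real> \<and> Re (f b) \<ge> 0 \<longrightarrow>
           (\<Sum>i\<in>UNIV. (1 - (norm (b i))\<^sup>2) * norm (partial_deriv f i b)) \<le> 2 * (1 - Re (f b))))"
proof (intro conjI impI ballI)
  show "(\<Sum>i\<in>UNIV. norm (partial_deriv f i (\<lambda>_. 0))) \<le> 2 * (1 - Re (f (\<lambda>_. 0))) * cos_factor m"
  proof (cases m)
    case (enat n)
    from sum_norm_partial_deriv_0_le[OF summable[unfolded enat] f_eq[unfolded enat] re_le]
    show ?thesis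
      by (simp add: enat cos_factor_def)
  next
    case infinity
    have "(\<lambda>_. 0) \<in> polydisc"
      by (simp add: polydisc_def)
    from weighted_sum_norm_partial_deriv_le[OF summable f_eq re_le this] show ?thesis
      by (simp add: infinity cos_factor_def)
  qed
next
  fix b :: "'k \<Rightarrow> complex" assume "b \<in> polydisc"
  then show "(\<Sum>i\<in>UNIV. (1 - (norm (b i))\<^sup>2) * norm (partial_deriv f i b)) \<le> 2 * (1 - Re (f b))"
    by (rule weighted_sum_norm_partial_deriv_le[OF summable f_eq re_le])
qed

end
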